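(* Let $\Gamma$ be an abelian group and $A$ a $\Gamma$-graded $*$-ring. (a) If $A$ has no infinite set of nonzero, pairwise orthogonal, homogeneous projections, then $A$ is a graded Rickart $*$-ring if and only if $A$ is a graded Baer $*$-ring. (b) If for every homogeneous projection $p$ the corner $pAp$ has no infinite set of nonzero, pairwise orthogonal, homogeneous projections, then $A$ is a graded locally Rickart $*$-ring if and only if $A$ is a graded locally Baer $*$-ring.
   Context: Graded $*$-ring: $A=\bigoplus_\gamma A_\gamma$, $A_\gamma A_\delta\subseteq A_{\gamma+\delta}$, with involution $*$ such that $A_\gamma^*\subseteq A_{-\gamma}$. Projection: $p=p^2=p^*$; projections $p,q$ are orthogonal if $pq=0$. Graded Rickart $*$-ring: the right annihilator of every homogeneous element is generated as a right ideal by a homogeneous projection. Graded Baer $*$-ring: the right annihilator of every set of homogeneous elements is generated as a right ideal by a homogeneous projection. $A$ is a graded locally Rickart (resp. Baer) $*$-ring if $pAp$ is a graded Rickart (resp. Baer) $*$-ring for every homogeneous projection $p$. *)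

theory Defs
  imports Main
begin

text \<open>A ring (possibly without unit) of type 'a, graded by an abelian group 'g via
  the family of additive subgroups G, with involution st.\<close>

definition graded_star_ring :: "('g::ab_group_add \<Rightarrow> 'a::ring set) \<Rightarrow> ('a \<Rightarrow> 'a) \<Rightarrow> bool" where
  "graded_star_ring G st \<longleftrightarrow>
     (\<forall>\<gamma>. 0 \<in> G \<gamma> \<and> (\<forall>x\<in>G \<gamma>. \<forall>y\<in>G \<gamma>. x + y \<in> G \<gamma> \<and> - x \<in> G \<gamma>)) \<and>
     (\<forall>x. \<exists>S f. finite S \<and> (\<forall>\<gamma>\<in>S. f \<gamma> \<in> G \<gamma>) \<and> x = (\<Sum>\<gamma>\<in>S. f \<gamma>)) \<and>
     (\<forall>S f. finite S \<longrightarrow> (\<forall>\<gamma>\<in>S. f \<gamma> \<in> G \<gamma>) \<longrightarrow> (\<Sum>\<gamma>\<in>S. f \<gamma>) = 0 \<longrightarrow> (\<forall>\<gamma>\<in>S. f \<gamma> = 0)) \<and>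
     (\<forall>\<gamma> \<delta>. \<forall>x\<in>G \<gamma>. \<forall>y\<in>G \<delta>. x * y \<in> G (\<gamma> + \<delta>)) \<and>
     (\<forall>x y. st (x + y) = st x + st y) \<and>
     (\<forall>x y. st (x * y) = st y * st x) \<and>
     (\<forall>x. st (st x) = x) \<and>
     (\<forall>\<gamma>. \<forall>x\<in>G \<gamma>. st x \<in> G (- \<gamma>))"

definition homogeneous :: "('g \<Rightarrow> 'a set) \<Rightarrow> 'a \<Rightarrow> bool" where
  "homogeneous G x \<longleftrightarrow> (\<exists>\<gamma>. x \<in> G \<gamma>)"

definition projection :: "('a::ring \<Rightarrow> 'a) \<Rightarrow> 'a \<Rightarrow> bool" where
  "projection st p \<longleftrightarrow> p * p = p \<and> st p = p"

definition rann :: "'a::ring set \<Rightarrow> 'a set \<Rightarrow> 'a set" where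
  "rann R S = {x \<in> R. \<forall>s\<in>S. s * x = 0}"

definition right_ideal_gen :: "'a::ring set \<Rightarrow> 'a \<Rightarrow> 'a set" where
  "right_ideal_gen R q = {q * y | y. y \<in> R}"

definition graded_rickart :: "('g \<Rightarrow> 'a::ring set) \<Rightarrow> ('a \<Rightarrow> 'a) \<Rightarrow> 'a set \<Rightarrow> bool" where
  "graded_rickart G st R \<longleftrightarrow>
     (\<forall>x\<in>R. homogeneous G x \<longrightarrow>
        (\<exists>q\<in>R. homogeneous G q \<and> projection st q \<and> rann R {x} = right_ideal_gen R q))"

definition graded_baer :: "('g \<Rightarrow> 'a::ring set) \<Rightarrow> ('a \<Rightarrow> 'a) \<Rightarrow> 'a set \<Rightarrow> bool" where
  "graded_baer G st R \<longleftrightarrow>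
     (\<forall>S. S \<subseteq> R \<longrightarrow> (\<forall>x\<in>S. homogeneous G x) \<longrightarrow>
        (\<exists>q\<in>R. homogeneous G q \<and> projection st q \<and> rann R S = right_ideal_gen R q))"

definition no_inf_orth_proj :: "('g \<Rightarrow> 'a::ring set) \<Rightarrow> ('a \<Rightarrow> 'a) \<Rightarrow> 'a set \<Rightarrow> bool" where
  "no_inf_orth_proj G st R \<longleftrightarrow>
     \<not> (\<exists>P. infinite P \<and> P \<subseteq> R \<and>
          (\<forall>p\<in>P. p \<noteq> 0 \<and> projection st p \<and> homogeneous G p) \<and>
          (\<forall>p\<in>P. \<forall>q\<in>P. p \<noteq> q \<longrightarrow> p * q = 0))"

definition corner :: "'a::ring \<Rightarrow> 'a set" where
  "corner p = {p * x * p | x. True}"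

definition corner_grading :: "('g \<Rightarrow> 'a::ring set) \<Rightarrow> 'a \<Rightarrow> 'g \<Rightarrow> 'a set" where
  "corner_grading G p \<gamma> = {p * x * p | x. x \<in> G \<gamma>}"

definition graded_locally_rickart :: "('g \<Rightarrow> 'a::ring set) \<Rightarrow> ('a \<Rightarrow> 'a) \<Rightarrow> bool" where
  "graded_locally_rickart G st \<longleftrightarrow>
     (\<forall>p. homogeneous G p \<longrightarrow> projection st p \<longrightarrow>
        graded_rickart (corner_grading G p) st (corner p))"

definition graded_locally_baer :: "('g \<Rightarrow> 'a::ring set) \<Rightarrow> ('a \<Rightarrow> 'a) \<Rightarrow> bool" where
  "graded_locally_baer G st \<longleftrightarrow>
     (\<forall>p. homogeneous G p \<longrightarrow> projection st p \<longrightarrow>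
        graded_baer (corner_grading G p) st (corner p))"

end

theory Submission imports Defs begin

text \<open>
  Homogeneous projections have degree 0, since p = p p lies in degrees \<gamma> and 2\<gamma>.
  Hence products and differences of the projections occurring below stay homogeneous.

  Conversely, in a Rickart ring the annihilator of 0 is uR
  for a projection u, which is then an identity of R. If rann {x} = eR and rann F = fR, then
  rann (insert x F) = eR \<inter> fR, and this intersection is the annihilator of (u - f) e, so by
  induction the annihilator of every finite set of homogeneous elements is generated by a
  homogeneous projection. A strictly descending chain of projections c(0) > c(1) > \<dots> yields the
  infinite orthogonal family c(i) - c(i+1); without such families the order on projections is
  well-founded, and a minimal generator m = rann F, F \<subseteq> S finite, satisfies mR = rann S.
  Corners pAp with their induced grading are again of this kind, which gives part (b).
\<close>

lemma graded_baer_imp_graded_rickart: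
  assumes "graded_baer G st R" shows "graded_rickart G st R"
  using assms unfolding graded_baer_def graded_rickart_def by auto

text \<open>R is a *-closed subring and Z a subring of homogeneous elements of R containing all
  homogeneous projections of R; for A itself Z is the degree-0 component, for a corner pAp
  it is p A(0) p.\<close>

locale graded_star_subring =
  fixes G :: "'g \<Rightarrow> 'a::ring set" and st :: "'a \<Rightarrow> 'a" and R :: "'a set" and Z :: "'a set"
  assumes st_add: "\<And>x y. st (x + y) = st x + st y"
    and st_mult: "\<And>x y. st (x * y) = st y * st x"
    and st_st: "\<And>x. st (st x) = x"
    and zero_R: "0 \<in> R"
    and diff_R: "\<And>x y. x \<in> R \<Longrightarrow> y \<in> R \<Longrightarrow> x - y \<in> R"
    and mult_R: "\<And>x y. x \<in> R \<Longrightarrow> y \<in> R \<Longrightarrow> x * y \<in> R"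
    and st_R: "\<And>x. x \<in> R \<Longrightarrow> st x \<in> R"
    and Z_subset_R: "Z \<subseteq> R"
    and zero_Z: "0 \<in> Z"
    and diff_Z: "\<And>x y. x \<in> Z \<Longrightarrow> y \<in> Z \<Longrightarrow> x - y \<in> Z"
    and mult_Z: "\<And>x y. x \<in> Z \<Longrightarrow> y \<in> Z \<Longrightarrow> x * y \<in> Z"
    and homogeneous_Z: "\<And>x. x \<in> Z \<Longrightarrow> homogeneous G x"
    and projection_in_Z: "\<And>q. q \<in> R \<Longrightarrow> homogeneous G q \<Longrightarrow> projection st q \<Longrightarrow> q \<in> Z"
begin

lemma st_diff: "st (x - y) = st x - st y"
  using st_add[of "x - y" y] by (simp add: eq_diff_eq)

lemma projection_left_absorb_imp_right:
  assumes "projection st e" "projection st f" "e = e * f"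
  shows "e = f * e"
  using assms unfolding projection_def by (metis st_mult)

lemma projection_right_absorb_imp_left:
  assumes "projection st e" "projection st f" "e = f * e"
  shows "e = e * f"
  using assms unfolding projection_def by (metis st_mult)

lemma descending_projections_differences:
  assumes proj: "\<And>i. projection st (c i)"
    and below: "\<And>i. c (Suc i) = c (Suc i) * c i"
    and neq: "\<And>i. c (Suc i) \<noteq> c i"
  defines "d \<equiv> \<lambda>i. c i - c (Suc i)"
  shows "projection st (d i)" and "d i \<noteq> 0" and "i \<noteq> j \<Longrightarrow> d i * d j = 0"
proof -
  have idem: "c i * c i = c i" and sa: "st (c i) = c i" for i
    using proj unfolding projection_def by auto
  have right: "c j = c j * c i" if "i \<le> j" for i j
    using that
  proof (induction j rule: dec_induct)
    case base then show ?case using idem by simp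
  next
    case (step n)
    have "c (Suc n) * c i = c (Suc n) * (c n * c i)"
      using below[of n] by (metis mult.assoc)
    then show ?case using step.IH below[of n] by simp
  qed
  have left: "c j = c i * c j" if "i \<le> j" for i j
    using projection_left_absorb_imp_right[OF proj proj right[OF that]] .
  have expand: "d i * d j = c i * c j - c i * c (Suc j) - c (Suc i) * c j + c (Suc i) * c (Suc j)"
    for i j by (simp add: d_def algebra_simps)
  have "c (Suc i) * c i = c (Suc i)" "c i * c (Suc i) = c (Suc i)"
    using right[of i "Suc i"] left[of i "Suc i"] by auto
  then have "d i * d i = d i" using expand[of i i] idem by (simp add: d_def)
  moreover have "st (d i) = d i" using sa by (simp add: d_def st_diff)
  ultimately show "projection st (d i)" unfolding projection_def by simp
  show "d i \<noteq> 0" using neq[of i] by (simp add: d_def)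
  show "d i * d j = 0" if "i \<noteq> j"
  proof (cases "i < j")
    case True
    then have "c i * c j = c j" "c i * c (Suc j) = c (Suc j)" "c (Suc i) * c j = c j"
      "c (Suc i) * c (Suc j) = c (Suc j)" using left by (metis Suc_leI less_imp_le le_SucI)+
    then show ?thesis using expand[of i j] by simp
  next
    case False
    then have "j < i" using that by simp
    then have "c i * c j = c i" "c i * c (Suc j) = c i" "c (Suc i) * c j = c (Suc i)"
      "c (Suc i) * c (Suc j) = c (Suc i)" using right by (metis Suc_leI less_imp_le le_SucI)+
    then show ?thesis using expand[of i j] by simp
  qed
qed

definition proj_less :: "('a \<times> 'a) set" where
  "proj_less = {(a, b). a \<in> Z \<and> b \<in> Z \<and> projection st a \<and> projection st b \<and> a = a * b \<and> a \<noteq> b}"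

lemma wf_proj_less:
  assumes "no_inf_orth_proj G st R"
  shows "wf proj_less"
proof (rule ccontr)
  assume "\<not> wf proj_less"
  then obtain c where c: "\<And>i. (c (Suc i), c i) \<in> proj_less"
    unfolding wf_iff_no_infinite_down_chain by blast
  define d where "d i = c i - c (Suc i)" for i
  have proj: "\<And>i. projection st (c i)" and cZ: "\<And>i. c i \<in> Z"
    using c unfolding proj_less_def by auto
  note diffs = descending_projections_differences[of c, folded d_def]
  have dproj: "projection st (d i)" and dnz: "d i \<noteq> 0"
    and orth: "i \<noteq> j \<Longrightarrow> d i * d j = 0" for i j
    using diffs[OF proj] c unfolding proj_less_def by auto
  have "inj d"
  proof (rule injI, rule ccontr)
    fix i j assume "d i = d j" "i \<noteq> j"
    then have "d i * d i = 0" using orth by metis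
    then show False using dproj[of i] dnz[of i] unfolding projection_def by simp
  qed
  then have "infinite (range d)" using finite_imageD infinite_UNIV_nat by blast
  moreover have "range d \<subseteq> R" using diff_Z cZ Z_subset_R by (auto simp: d_def)
  moreover have "\<forall>p\<in>range d. p \<noteq> 0 \<and> projection st p \<and> homogeneous G p"
    using dnz dproj diff_Z cZ homogeneous_Z by (auto simp: d_def)
  moreover have "\<forall>p\<in>range d. \<forall>q\<in>range d. p \<noteq> q \<longrightarrow> p * q = 0"
    using orth by (metis imageE)
  ultimately show False using assms unfolding no_inf_orth_proj_def by blast
qed

lemma rickart_unit:
  assumes "graded_rickart G st R"
  obtains u where "u \<in> Z" "projection st u" "\<And>x. x \<in> R \<Longrightarrow> u * x = x"
    "\<And>x. x \<in> R \<Longrightarrow> x * u = x"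
proof -
  obtain u where u: "u \<in> R" "homogeneous G u" "projection st u" "rann R {0} = right_ideal_gen R u"
    using assms zero_R homogeneous_Z[OF zero_Z] unfolding graded_rickart_def by blast
  have uu: "u * u = u" and su: "st u = u" using u(3) unfolding projection_def by auto
  have left: "u * x = x" if "x \<in> R" for x
  proof -
    have "x \<in> rann R {0}" using that by (simp add: rann_def)
    then obtain y where "x = u * y" unfolding u(4) right_ideal_gen_def by auto
    then show ?thesis using uu by (metis mult.assoc)
  qed
  have "x * u = x" if "x \<in> R" for x
    using left[OF st_R[OF that]] st_mult st_st su by metis
  with left that u projection_in_Z show ?thesis by blast
qed

lemma rickart_projection_meet:
  assumes rick: "graded_rickart G st R"
    and unit: "u \<in> Z" "\<And>x. x \<in> R \<Longrightarrow> u * x = x" "\<And>x. x \<in> R \<Longrightarrow> x * u = x" "st u = u"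
    and e: "e \<in> Z" "projection st e" and f: "f \<in> Z" "projection st f"
  shows "\<exists>m\<in>Z. projection st m \<and> right_ideal_gen R m = right_ideal_gen R e \<inter> right_ideal_gen R f"
proof -
  have eR: "e \<in> R" and uR: "u \<in> R" using e unit Z_subset_R by auto
  have ee: "e * e = e" and se: "st e = e" using e(2) unfolding projection_def by auto
  have ff: "f * f = f" using f(2) unfolding projection_def by auto
  define w where "w = (u - f) * e"
  have wZ: "w \<in> Z" unfolding w_def using mult_Z diff_Z unit(1) e(1) f(1) by blast
  then obtain g where g: "g \<in> R" "homogeneous G g" "projection st g" "rann R {w} = right_ideal_gen R g"
    using rick Z_subset_R homogeneous_Z unfolding graded_rickart_def by blast
  have gg: "g * g = g" and sg: "st g = g" using g(3) unfolding projection_def by auto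
  have in_gR: "z \<in> right_ideal_gen R g \<longleftrightarrow> z \<in> R \<and> w * z = 0" for z
    using g(4)[symmetric] by (auto simp: rann_def)
  have gR_fix: "g * z = z" if "z \<in> right_ideal_gen R g" for z
    using that gg unfolding right_ideal_gen_def by (auto simp: mult.assoc[symmetric])
  have "w * (u - e) = 0"
    using ee unit(3)[OF eR] by (simp add: w_def mult.assoc right_diff_distrib)
  then have "g * (u - e) = u - e" using gR_fix in_gR diff_R uR eR by blast
  then have ge: "g - g * e = u - e" using unit(3)[OF g(1)] by (simp add: right_diff_distrib)
  have "st (g - g * e) = g - e * g" using sg se by (simp add: st_diff st_mult)
  moreover have "st (u - e) = u - e" using unit(4) se by (simp add: st_diff)
  ultimately have "g - e * g = g - g * e" using ge by simp
  then have comm: "e * g = g * e" by simp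
  define m where "m = e * g"
  have "m * m = (e * e) * (g * g)" by (metis comm m_def mult.assoc)
  then have "projection st m" using comm ee gg sg se by (simp add: m_def st_mult projection_def)
  moreover have "m \<in> Z" unfolding m_def using mult_Z e(1) projection_in_Z g by blast
  moreover have "right_ideal_gen R m = right_ideal_gen R e \<inter> right_ideal_gen R f"
  proof (rule set_eqI, rule iffI)
    fix z assume "z \<in> right_ideal_gen R m"
    then obtain a where a: "z = m * a" "a \<in> R" unfolding right_ideal_gen_def by auto
    have zR: "z \<in> R" and ze: "z = e * (g * a)" and gaR: "g * a \<in> R"
      using a mult_R eR g(1) by (auto simp: m_def mult.assoc)
    have "z \<in> right_ideal_gen R g"
      using a mult_R eR unfolding right_ideal_gen_def by (auto simp: m_def comm mult.assoc)
    then have "w * z = 0" using in_gR by blast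
    moreover have "e * z = z" using ze ee by (metis mult.assoc)
    ultimately have "(u - f) * z = 0" by (simp add: w_def mult.assoc)
    then have "z = f * z" using unit(2)[OF zR] by (simp add: left_diff_distrib)
    then show "z \<in> right_ideal_gen R e \<inter> right_ideal_gen R f"
      using ze gaR zR unfolding right_ideal_gen_def by blast
  next
    fix z assume "z \<in> right_ideal_gen R e \<inter> right_ideal_gen R f"
    then obtain a b where ab: "z = e * a" "a \<in> R" "z = f * b" "b \<in> R"
      unfolding right_ideal_gen_def by blast
    have zR: "z \<in> R" using ab mult_R eR by blast
    have ez: "e * z = z" and fz: "f * z = z" using ab ee ff by (metis mult.assoc)+
    have "w * z = (u - f) * z" by (simp add: w_def mult.assoc ez)
    also have "\<dots> = 0" using unit(2)[OF zR] fz by (simp add: left_diff_distrib)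
    finally have "g * z = z" using gR_fix in_gR zR by blast
    then have "z = m * z" using ez by (simp add: m_def mult.assoc)
    then show "z \<in> right_ideal_gen R m" using zR unfolding right_ideal_gen_def by blast
  qed
  ultimately show ?thesis by blast
qed

lemma rickart_rann_finite:
  assumes rick: "graded_rickart G st R"
    and "finite F" "F \<subseteq> R" "\<forall>x\<in>F. homogeneous G x"
  shows "\<exists>m\<in>Z. projection st m \<and> rann R F = right_ideal_gen R m"
proof -
  obtain u where u: "u \<in> Z" "projection st u" "\<And>x. x \<in> R \<Longrightarrow> u * x = x"
    "\<And>x. x \<in> R \<Longrightarrow> x * u = x"
    using rickart_unit[OF rick] by blast
  have su: "st u = u" using u(2) unfolding projection_def by simp
  from assms(2-4) show ?thesis
  proof (induction F rule: finite_induct)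
    case empty
    have "right_ideal_gen R u = R"
      unfolding right_ideal_gen_def using u(1) u(3) Z_subset_R mult_R by force
    moreover have "rann R {} = R" by (simp add: rann_def)
    ultimately show ?case using u(1,2) by auto
  next
    case (insert x F)
    then obtain m where m: "m \<in> Z" "projection st m" "rann R F = right_ideal_gen R m" by auto
    obtain q where q: "q \<in> R" "homogeneous G q" "projection st q" "rann R {x} = right_ideal_gen R q"
      using rick insert.prems unfolding graded_rickart_def by auto
    have "rann R (insert x F) = rann R {x} \<inter> rann R F" by (auto simp: rann_def)
    then show ?case
      using rickart_projection_meet[OF rick u(1,3,4) su projection_in_Z[OF q(1-3)] q(3) m(1,2)]
        q(4) m(3) by auto
  qed
qed

lemma rickart_imp_baer:
  assumes rick: "graded_rickart G st R" and noinf: "no_inf_orth_proj G st R"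
  shows "graded_baer G st R"
  unfolding graded_baer_def
proof (intro allI impI)
  fix S assume SR: "S \<subseteq> R" and Sh: "\<forall>x\<in>S. homogeneous G x"
  define M where "M = {m \<in> Z. projection st m \<and> (\<exists>F. finite F \<and> F \<subseteq> S \<and> rann R F = right_ideal_gen R m)}"
  have fin: "\<exists>m\<in>Z. projection st m \<and> rann R F = right_ideal_gen R m"
    if "finite F" "F \<subseteq> S" for F
    using rickart_rann_finite[OF rick] that SR Sh by blast
  have "M \<noteq> {}" using fin[of "{}"] unfolding M_def by blast
  then obtain m where "m \<in> M" and minimal: "\<And>y. (y, m) \<in> proj_less \<Longrightarrow> y \<notin> M"
    using wfE_min[OF wf_proj_less[OF noinf]] by blast
  then obtain F where F: "finite F" "F \<subseteq> S" "rann R F = right_ideal_gen R m"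
    and mZ: "m \<in> Z" and pm: "projection st m" unfolding M_def by blast
  have "right_ideal_gen R m \<subseteq> rann R {x}" if xS: "x \<in> S" for x
  proof -
    obtain m' where m': "m' \<in> Z" "projection st m'" "rann R (insert x F) = right_ideal_gen R m'"
      using fin[of "insert x F"] F xS by auto
    have "m' \<in> right_ideal_gen R m'"
      using m'(1,2) Z_subset_R unfolding projection_def right_ideal_gen_def by force
    moreover have "rann R (insert x F) \<subseteq> rann R F" by (auto simp: rann_def)
    ultimately have "m' \<in> right_ideal_gen R m" using m'(3) F(3) by blast
    then obtain a where "m' = m * a" unfolding right_ideal_gen_def by blast
    then have "m' = m * m'" using pm unfolding projection_def by (metis mult.assoc)
    then have "m' = m' * m" using projection_right_absorb_imp_left[OF m'(2) pm] by blast
    moreover have "m' \<in> M" unfolding M_def using m' F xS by blast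
    ultimately have "m' = m" using minimal[of m'] m'(1,2) mZ pm unfolding proj_less_def by blast
    then show ?thesis using m'(3) by (auto simp: rann_def)
  qed
  then have "right_ideal_gen R m \<subseteq> rann R S" using F(3) unfolding rann_def by blast
  moreover have "rann R S \<subseteq> right_ideal_gen R m" using F(2,3) by (auto simp: rann_def)
  ultimately have "rann R S = right_ideal_gen R m" by (rule subset_antisym[rotated])
  then show "\<exists>q\<in>R. homogeneous G q \<and> projection st q \<and> rann R S = right_ideal_gen R q"
    using mZ Z_subset_R homogeneous_Z pm by blast
qed

lemma rickart_iff_baer:
  assumes "no_inf_orth_proj G st R"
  shows "graded_rickart G st R \<longleftrightarrow> graded_baer G st R"
  using rickart_imp_baer[OF _ assms] graded_baer_imp_graded_rickart by blast

end

lemma graded_star_ringD: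
  assumes "graded_star_ring G st"
  shows "0 \<in> G \<gamma>" "x \<in> G \<gamma> \<Longrightarrow> y \<in> G \<gamma> \<Longrightarrow> x - y \<in> G \<gamma>"
    "\<lbrakk>finite S; \<forall>\<gamma>\<in>S. f \<gamma> \<in> G \<gamma>; (\<Sum>\<gamma>\<in>S. f \<gamma>) = 0\<rbrakk> \<Longrightarrow> \<forall>\<gamma>\<in>S. f \<gamma> = 0"
    "x \<in> G \<gamma> \<Longrightarrow> y \<in> G \<delta> \<Longrightarrow> x * y \<in> G (\<gamma> + \<delta>)"
    "st (x + y) = st x + st y" "st (x * y) = st y * st x" "st (st x) = x"
  using assms unfolding graded_star_ring_def by (metis diff_conv_add_uminus)+

lemma homogeneous_projection_degree_zero:
  assumes gs: "graded_star_ring G st" and x: "x \<in> G \<gamma>" and p: "projection st x"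
  shows "x \<in> G 0"
proof (cases "\<gamma> = 0")
  case True then show ?thesis using x by simp
next
  case False
  have "x \<in> G (\<gamma> + \<gamma>)"
    using graded_star_ringD(4)[OF gs x x] p unfolding projection_def by simp
  then have neg: "- x \<in> G (\<gamma> + \<gamma>)"
    using graded_star_ringD(2)[OF gs graded_star_ringD(1)[OF gs]] by simp
  have ne: "\<gamma> \<noteq> \<gamma> + \<gamma>" using False by simp
  define f where "f \<delta> = (if \<delta> = \<gamma> then x else - x)" for \<delta>
  have "\<forall>\<delta>\<in>{\<gamma>, \<gamma> + \<gamma>}. f \<delta> = 0"
    using graded_star_ringD(3)[OF gs, of "{\<gamma>, \<gamma> + \<gamma>}" f] x neg ne by (simp add: f_def)
  then have "x = 0" by (simp add: f_def)
  then show ?thesis using graded_star_ringD(1)[OF gs] by simp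
qed

lemma graded_star_subring_UNIV:
  assumes gs: "graded_star_ring G st"
  shows "graded_star_subring G st UNIV (G 0)"
proof
  note F = graded_star_ringD[OF gs]
  show "x * y \<in> G 0" if "x \<in> G 0" "y \<in> G 0" for x y using F(4)[OF that] by simp
  show "q \<in> G 0" if "homogeneous G q" "projection st q" for q
    using that homogeneous_projection_degree_zero[OF gs] unfolding homogeneous_def by blast
qed (auto simp: graded_star_ringD[OF gs] homogeneous_def)

lemma corner_closed:
  assumes "projection st p" "\<And>x y. st (x * y) = st y * st x"
    and "x \<in> corner p" "y \<in> corner p"
  shows "x - y \<in> corner p" "x * y \<in> corner p" "st x \<in> corner p"
proof -
  obtain a b where ab: "x = p * a * p" "y = p * b * p" using assms(3,4) unfolding corner_def by blast
  have "x - y = p * (a - b) * p" by (simp add: ab algebra_simps)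
  moreover have "x * y = p * (a * p * b) * p" "st x = p * st a * p"
    using assms(1,2) ab unfolding projection_def by (metis mult.assoc)+
  ultimately show "x - y \<in> corner p" "x * y \<in> corner p" "st x \<in> corner p"
    unfolding corner_def by blast+
qed

lemma graded_star_subring_corner:
  assumes gs: "graded_star_ring G st" and ph: "homogeneous G p" and pp: "projection st p"
  shows "graded_star_subring (corner_grading G p) st (corner p) (corner_grading G p 0)"
proof
  note F = graded_star_ringD[OF gs]
  have p0: "p \<in> G 0" using homogeneous_projection_degree_zero[OF gs _ pp] ph
    unfolding homogeneous_def by blast
  have pp': "p * p = p" using pp unfolding projection_def by simp
  have sandwich: "p * x * p \<in> G \<gamma>" if "x \<in> G \<gamma>" for x \<gamma>
    using F(4)[OF F(4)[OF p0 that] p0] by simp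
  show "0 \<in> corner p" unfolding corner_def by (auto intro: exI[of _ 0])
  show "0 \<in> corner_grading G p 0" unfolding corner_grading_def using F(1) by force
  show "x - y \<in> corner_grading G p 0" "x * y \<in> corner_grading G p 0"
    if xy: "x \<in> corner_grading G p 0" "y \<in> corner_grading G p 0" for x y
  proof -
    obtain a b where ab: "x = p * a * p" "y = p * b * p" "a \<in> G 0" "b \<in> G 0"
      using xy unfolding corner_grading_def by auto
    have "x - y = p * (a - b) * p" by (simp add: ab algebra_simps)
    moreover have "x * y = p * (a * p * b) * p" using ab pp' by (metis mult.assoc)
    moreover have "a - b \<in> G 0" "a * p * b \<in> G 0" using ab p0 F(2,4) by (metis add_0)+
    ultimately show "x - y \<in> corner_grading G p 0" "x * y \<in> corner_grading G p 0"
      unfolding corner_grading_def by blast+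
  qed
  show "q \<in> corner_grading G p 0"
    if q: "q \<in> corner p" "homogeneous (corner_grading G p) q" "projection st q" for q
  proof -
    obtain x \<gamma> where x: "q = p * x * p" "x \<in> G \<gamma>"
      using q(2) unfolding homogeneous_def corner_grading_def by auto
    then have "q \<in> G \<gamma>" using sandwich by blast
    then have "q \<in> G 0" using homogeneous_projection_degree_zero[OF gs _ q(3)] by blast
    moreover have "q = p * q * p" using x(1) pp' by (metis mult.assoc)
    ultimately show ?thesis unfolding corner_grading_def by blast
  qed
qed (use graded_star_ringD[OF gs] corner_closed[OF pp] in
      \<open>auto simp: homogeneous_def corner_def corner_grading_def\<close>)

theorem mainTheorem6:
  fixes G :: "'g::ab_group_add \<Rightarrow> 'a::ring set" and st :: "'a \<Rightarrow> 'a"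
  assumes "graded_star_ring G st"
  shows "(no_inf_orth_proj G st UNIV \<longrightarrow>
            (graded_rickart G st UNIV \<longleftrightarrow> graded_baer G st UNIV)) \<and>
         ((\<forall>p. homogeneous G p \<longrightarrow> projection st p \<longrightarrow>
              no_inf_orth_proj (corner_grading G p) st (corner p)) \<longrightarrow>
            (graded_locally_rickart G st \<longleftrightarrow> graded_locally_baer G st))"
proof (intro conjI impI)
  show "graded_rickart G st UNIV \<longleftrightarrow> graded_baer G st UNIV"
    if "no_inf_orth_proj G st UNIV"
    using graded_star_subring.rickart_iff_baer[OF graded_star_subring_UNIV[OF assms] that] .
next
  assume "\<forall>p. homogeneous G p \<longrightarrow> projection st p \<longrightarrow>
            no_inf_orth_proj (corner_grading G p) st (corner p)"
  then have "graded_rickart (corner_grading G p) st (corner p)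
               \<longleftrightarrow> graded_baer (corner_grading G p) st (corner p)"
    if "homogeneous G p" "projection st p" for p
    using graded_star_subring.rickart_iff_baer[OF graded_star_subring_corner[OF assms that]] that
    by blast
  then show "graded_locally_rickart G st \<longleftrightarrow> graded_locally_baer G st"
    unfolding graded_locally_rickart_def graded_locally_baer_def by simp
qed

end
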